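(* Let $\mathfrak p$ be a probability distribution supported by $\mathbb N$ and let $B\subseteq\mathbb N^{\mathbb N}$ be the set of bounded sequences. Then $\dim_H\pi_{\mathfrak p}(B)=1$.
   Context: $\mathbb N=\{1,2,3,\dots\}$. A probability distribution $\mathfrak p=(p_i)_{i\in\mathbb N}$ is supported by $\mathbb N$ if $p_i\in(0,1)$ for all $i$ and $\sum_{i=1}^\infty p_i=1$. Set $\widehat{p_1}=0$ and $\widehat{p_n}=\sum_{i=1}^{n-1}p_i$ for $n\ge 2$. For $n\in\mathbb N$ let $T_n x=p_n x+\widehat{p_n}$. Define $\pi_{\mathfrak p}:\mathbb N^{\mathbb N}\to[0,1)$ by $\pi_{\mathfrak p}((n_j))=\lim_{j\to\infty}T_{n_1}\circ\cdots\circ T_{n_j}(0)=\widehat{p_{n_1}}+\sum_{j=1}^\infty p_{n_1}\cdots p_{n_j}\widehat{p_{n_{j+1}}}$. $\dim_H$ denotes Hausdorff dimension. *)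

theory Defs
  imports "HOL-Analysis.Analysis"
begin

text \<open>Probability distribution supported by N = {1,2,...}; p is indexed from 1
  (the value p 0 is irrelevant).\<close>
definition prob_supported_by_N :: "(nat \<Rightarrow> real) \<Rightarrow> bool" where
  "prob_supported_by_N p \<longleftrightarrow> (\<forall>i\<ge>1. 0 < p i \<and> p i < 1) \<and> ((\<lambda>i. p (Suc i)) sums 1)"

definition phat :: "(nat \<Rightarrow> real) \<Rightarrow> nat \<Rightarrow> real" where
  "phat p n = (\<Sum>i\<in>{1..<n}. p i)"

text \<open>Sequences (n_j)_{j>=1} in N^N are represented as ns :: nat => nat with
  ns k = n_{k+1} and all values >= 1.\<close>
definition seqN :: "(nat \<Rightarrow> nat) set" where
  "seqN = {ns. \<forall>k. ns k \<ge> 1}"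

definition pi_p :: "(nat \<Rightarrow> real) \<Rightarrow> (nat \<Rightarrow> nat) \<Rightarrow> real" where
  "pi_p p ns = phat p (ns 0) + (\<Sum>j. (\<Prod>k\<le>j. p (ns k)) * phat p (ns (Suc j)))"

definition bounded_seqs :: "(nat \<Rightarrow> nat) set" where
  "bounded_seqs = {ns \<in> seqN. \<exists>M. \<forall>k. ns k \<le> M}"

definition hausdorff_delta :: "real \<Rightarrow> real \<Rightarrow> real set \<Rightarrow> ennreal" where
  "hausdorff_delta s \<delta> E = (INF U \<in> {U :: nat \<Rightarrow> real set.
       E \<subseteq> (\<Union>i. U i) \<and> (\<forall>i. bounded (U i) \<and> diameter (U i) \<le> \<delta>)}.
       (\<Sum>i. ennreal (diameter (U i) powr s)))"

definition hausdorff_measure :: "real \<Rightarrow> real set \<Rightarrow> ennreal" where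
  "hausdorff_measure s E = (SUP \<delta> \<in> {0<..}. hausdorff_delta s \<delta> E)"

text \<open>Hausdorff dimension: inf of s > 0 with H^s(E) = 0 (for subsets of R this
  set contains (1,infinity), hence is nonempty; Inf of (0,infinity) is 0).\<close>
definition hausdorff_dim :: "real set \<Rightarrow> real" where
  "hausdorff_dim E = Inf {s. s > 0 \<and> hausdorff_measure s E = 0}"

end

theory Submission
  imports Defs "HOL-Library.Sublist"
begin

text \<open>The image lies in [0,1], so its s-dimensional Hausdorff measure vanishes for s > 1. For s < 1
  choose M with p_1^s + ... + p_M^s >= 1 and restrict to sequences with letters in {1..M}. The
  weights p_i^s define a mass distribution on cylinders: by Koenig's lemma every cover of these
  sequences by prefixes has a finite subcover, and a finite prefix cover carries mass at least 1.
  Conversely, the stopping words of scale d whose cylinders meet a set of diameter d carry mass at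
  most C d^s: their cylinders are disjoint intervals of length between pmin d and d inside an
  interval of length 4d, and a cylinder of length l has mass at most l^s = l l^(s-1). Hence every
  countable cover of the image by sets U_i has sum diam(U_i)^s >= 1/C, and the s-dimensional
  Hausdorff measure is positive.\<close>

section \<open>Hausdorff measure on the real line\<close>

lemma hausdorff_delta_unit_interval_le:
  fixes E :: "real set"
  assumes E: "E \<subseteq> {0..1}" and n: "1 \<le> n" "1 / real n \<le> \<delta>"
  shows "hausdorff_delta s \<delta> E \<le> ennreal (real n powr (1 - s))"
proof -
  define U where "U i = (if i < n then {real i / n .. real (Suc i) / n} else {})" for i
  have diam: "diameter (U i) = (if i < n then 1 / real n else 0)" for i
    unfolding U_def using n by (auto simp: diameter_closed_interval divide_simps)
  have "E \<subseteq> (\<Union>i. U i)"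
  proof
    fix x assume "x \<in> E"
    then have x: "0 \<le> x" "x \<le> 1" using E by auto
    define i where "i = min (n - 1) (nat \<lfloor>x * n\<rfloor>)"
    have fl: "real (nat \<lfloor>x * n\<rfloor>) \<le> x * n" "x * n < real (nat \<lfloor>x * n\<rfloor>) + 1"
      using x by (auto simp: of_nat_nat)
    have "x * n \<le> n" using x by (simp add: mult_left_le_one_le)
    then have "real i \<le> x * n" "x * n \<le> real i + 1"
      unfolding i_def using fl n(1) by (auto simp: min_def of_nat_diff)
    moreover have "i < n" unfolding i_def using n(1) by simp
    ultimately have "x \<in> U i" unfolding U_def using n(1) by (auto simp: divide_simps)
    then show "x \<in> (\<Union>i. U i)" by blast
  qed
  then have "hausdorff_delta s \<delta> E \<le> (\<Sum>i. ennreal (diameter (U i) powr s))"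
    unfolding hausdorff_delta_def using diam n order_trans[OF _ n(2), of 0]
    by (intro INF_lower) (auto simp: U_def)
  also have "\<dots> = (\<Sum>i<n. ennreal ((1 / real n) powr s))"
    by (subst suminf_finite[of "{..<n}"]) (auto simp: diam)
  also have "\<dots> = ennreal (real n * (1 / real n) powr s)"
    by (subst sum_ennreal) auto
  also have "\<dots> = ennreal (real n powr (1 - s))"
    using n(1) by (simp add: powr_divide powr_diff)
  finally show ?thesis .
qed

lemma hausdorff_measure_eq_0_if_subset_unit_interval:
  fixes E :: "real set"
  assumes E: "E \<subseteq> {0..1}" and s: "1 < s"
  shows "hausdorff_measure s E = 0"
proof -
  have "hausdorff_delta s \<delta> E \<le> ennreal e" if "0 < \<delta>" "0 < e" for \<delta> e
  proof -
    have "(\<lambda>n. real n powr (1 - s)) \<longlonglongrightarrow> 0"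
      using s by (intro tendsto_neg_powr filterlim_real_sequentially) auto
    then have "\<forall>\<^sub>F n in sequentially. real n powr (1 - s) < e"
      using \<open>0 < e\<close> by (rule order_tendstoD)
    moreover have "\<forall>\<^sub>F n in sequentially. max 1 (1 / \<delta>) \<le> real n"
      using filterlim_real_sequentially unfolding filterlim_at_top by blast
    ultimately have "\<forall>\<^sub>F n in sequentially. real n powr (1 - s) < e \<and> max 1 (1 / \<delta>) \<le> real n"
      by (rule eventually_conj)
    then obtain n where n: "real n powr (1 - s) < e" "max 1 (1 / \<delta>) \<le> real n"
      unfolding eventually_sequentially by blast
    then have "1 \<le> n" "1 / real n \<le> \<delta>"
      using \<open>0 < \<delta>\<close> by (simp_all add: divide_le_eq mult.commute)
    then have "hausdorff_delta s \<delta> E \<le> ennreal (real n powr (1 - s))"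
      by (rule hausdorff_delta_unit_interval_le[OF E])
    also have "\<dots> \<le> ennreal e" using n(1) by (simp add: ennreal_leI)
    finally show ?thesis .
  qed
  then have "hausdorff_delta s \<delta> E = 0" if "0 < \<delta>" for \<delta>
    using that by (metis add_0 ennreal_le_epsilon le_zero_eq)
  then show ?thesis unfolding hausdorff_measure_def by simp
qed

lemma exists_positive_upper_bounds_sum_powr_le:
  fixes r :: "nat \<Rightarrow> real"
  assumes s: "0 < s" and e: "0 < e" and r: "\<And>i. r i < 1"
  shows "\<exists>d. (\<forall>i. r i \<le> d i \<and> 0 < d i \<and> d i < 1)
    \<and> (\<Sum>i. ennreal (d i powr s)) \<le> (\<Sum>i. ennreal (r i powr s)) + ennreal e"
proof -
  define eta where "eta i = min (1/2) ((e * (1/2) ^ Suc i) powr (1 / s))" for i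
  define d where "d i = max (r i) (eta i)" for i
  have eta: "0 < eta i" "eta i < 1" "eta i powr s \<le> e * (1/2) ^ Suc i" for i
  proof -
    show "0 < eta i" "eta i < 1" unfolding eta_def using e by auto
    have "eta i powr s \<le> ((e * (1/2) ^ Suc i) powr (1 / s)) powr s"
      unfolding eta_def using e s by (intro powr_mono2) auto
    then show "eta i powr s \<le> e * (1/2) ^ Suc i"
      using e s by (simp add: powr_powr del: power_Suc)
  qed
  have d_powr: "d i powr s \<le> r i powr s + e * (1/2) ^ Suc i" for i
  proof -
    have "d i = r i \<or> d i = eta i" unfolding d_def by auto
    then show ?thesis using eta(3)[of i] by (smt (verit) powr_ge_zero)
  qed
  have "(\<Sum>i. ennreal (d i powr s)) \<le> (\<Sum>i. ennreal (r i powr s) + ennreal (e * (1/2) ^ Suc i))"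
  proof (intro suminf_le summableI)
    fix i
    have "ennreal (d i powr s) \<le> ennreal (r i powr s + e * (1/2) ^ Suc i)"
      using d_powr by (rule ennreal_leI)
    then show "ennreal (d i powr s) \<le> ennreal (r i powr s) + ennreal (e * (1/2) ^ Suc i)"
      using e by (simp add: ennreal_plus del: power_Suc)
  qed
  also have "\<dots> = (\<Sum>i. ennreal (r i powr s)) + (\<Sum>i. ennreal (e * (1/2) ^ Suc i))"
    by (rule suminf_add[symmetric]) auto
  also have "(\<Sum>i. ennreal (e * (1/2) ^ Suc i)) = ennreal e"
  proof -
    have "(\<lambda>i. e * (1/2::real) ^ Suc i) sums (e * 1)"
      using power_half_series by (rule sums_mult)
    then show ?thesis using e by (simp add: suminf_ennreal2 sums_iff del: power_Suc)
  qed
  finally have "(\<Sum>i. ennreal (d i powr s)) \<le> (\<Sum>i. ennreal (r i powr s)) + ennreal e" .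
  moreover have "r i \<le> d i \<and> 0 < d i \<and> d i < 1" for i
    unfolding d_def using eta(1,2)[of i] r[of i] by (simp add: less_max_iff_disj)
  ultimately show ?thesis by blast
qed

lemma hausdorff_delta_ge_if_positive_covers_ge:
  assumes s: "0 < s" and \<delta>: "\<delta> < 1"
    and covers: "\<And>U d. E \<subseteq> (\<Union>i. U i) \<Longrightarrow> (\<And>i. bounded (U i)) \<Longrightarrow> (\<And>i. diameter (U i) \<le> d i)
      \<Longrightarrow> (\<And>i. 0 < d i \<and> d i < 1) \<Longrightarrow> c \<le> (\<Sum>i. ennreal (d i powr s))"
  shows "c \<le> hausdorff_delta s \<delta> E"
  unfolding hausdorff_delta_def
proof (rule INF_greatest, clarify)
  fix U :: "nat \<Rightarrow> real set"
  assume cov: "E \<subseteq> (\<Union>i. U i)" and U: "\<forall>i. bounded (U i) \<and> diameter (U i) \<le> \<delta>"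
  show "c \<le> (\<Sum>i. ennreal (diameter (U i) powr s))"
  proof (rule ennreal_le_epsilon)
    fix e :: real assume e: "0 < e"
    have "diameter (U i) < 1" for i using U \<delta> by (meson order.strict_trans1)
    then obtain d where d: "\<forall>i. diameter (U i) \<le> d i \<and> 0 < d i \<and> d i < 1"
      and sum_le: "(\<Sum>i. ennreal (d i powr s)) \<le> (\<Sum>i. ennreal (diameter (U i) powr s)) + ennreal e"
      using exists_positive_upper_bounds_sum_powr_le[OF s e, of "\<lambda>i. diameter (U i)"] by blast
    have "c \<le> (\<Sum>i. ennreal (d i powr s))"
      by (rule covers[OF cov]) (use U d in blast)+
    with sum_le show "c \<le> (\<Sum>i. ennreal (diameter (U i) powr s)) + ennreal e" by simp
  qed
qed

lemma hausdorff_dim_eqI: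
  assumes "0 < t"
    and above: "\<And>s. t < s \<Longrightarrow> hausdorff_measure s E = 0"
    and below: "\<And>s. 0 < s \<Longrightarrow> s < t \<Longrightarrow> hausdorff_measure s E \<noteq> 0"
  shows "hausdorff_dim E = t"
proof -
  define A where "A = {s. 0 < s \<and> hausdorff_measure s E = 0}"
  have A_ge: "t \<le> s" if "s \<in> A" for s
    using below that unfolding A_def by force
  have A_gt: "s \<in> A" if "t < s" for s
    unfolding A_def using above that \<open>0 < t\<close> by simp
  have "t \<le> Inf A"
    using A_gt[of "t + 1"] by (intro cInf_greatest) (auto intro: A_ge)
  moreover have "Inf A \<le> t + e" if "0 < e" for e
    using that A_ge A_gt[of "t + e"] by (intro cInf_lower bdd_belowI[of A t]) auto
  ultimately show ?thesis
    unfolding hausdorff_dim_def A_def[symmetric] by (meson field_le_epsilon order.antisym)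
qed

lemma sum_lengths_le_if_disjoint_intervals:
  fixes a b :: "'a \<Rightarrow> real"
  assumes "finite W" "\<forall>w\<in>W. a w < b w"
    and "\<forall>w\<in>W. \<forall>w'\<in>W. w \<noteq> w' \<longrightarrow> b w \<le> a w' \<or> b w' \<le> a w"
    and "\<forall>w\<in>W. L \<le> a w \<and> b w \<le> R" "L \<le> R"
  shows "(\<Sum>w\<in>W. b w - a w) \<le> R - L"
  using assms
proof (induction "card W" arbitrary: W R)
  case 0
  then show ?case by simp
next
  case (Suc n)
  then have "Max (a ` W) \<in> a ` W" by (intro Max_in) auto
  then obtain x where x: "x \<in> W" "a x = Max (a ` W)" by auto
  \<comment> \<open>The interval starting last lies to the right of all the others.\<close>
  have "b w \<le> a x" if "w \<in> W - {x}" for w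
  proof -
    have "a w \<le> a x" using x Suc.prems(1) that by simp
    then have "\<not> b x \<le> a w" using Suc.prems(2) x(1) by force
    then show ?thesis using Suc.prems(3) that x(1) by blast
  qed
  then have "(\<Sum>w\<in>W - {x}. b w - a w) \<le> a x - L"
    using Suc x(1) by (intro Suc.hyps(1)) (auto simp: card_Diff_singleton)
  moreover have "(\<Sum>w\<in>W. b w - a w) = (b x - a x) + (\<Sum>w\<in>W - {x}. b w - a w)"
    using Suc.prems(1) x(1) by (simp add: sum.remove)
  ultimately show ?case using Suc.prems(4) x(1) by force
qed

section \<open>Words and prefix covers\<close>

definition seqs_upto :: "nat \<Rightarrow> (nat \<Rightarrow> nat) set" where
  "seqs_upto M = {w. \<forall>k. w k \<in> {1..M}}"

definition seq_take :: "nat \<Rightarrow> (nat \<Rightarrow> nat) \<Rightarrow> nat list" where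
  "seq_take k w = map w [0..<k]"

definition seq_drop :: "nat \<Rightarrow> (nat \<Rightarrow> nat) \<Rightarrow> nat \<Rightarrow> nat" where
  "seq_drop k w = (\<lambda>j. w (j + k))"

lemma seq_take_0 [simp]: "seq_take 0 w = []"
  by (simp add: seq_take_def)

lemma length_seq_take [simp]: "length (seq_take k w) = k"
  by (simp add: seq_take_def)

lemma seq_take_Suc: "seq_take (Suc k) w = w 0 # seq_take k (seq_drop 1 w)"
  unfolding seq_take_def seq_drop_def by (induction k) auto

lemma seq_take_Suc_snoc: "seq_take (Suc k) w = seq_take k w @ [w k]"
  by (simp add: seq_take_def)

lemma set_seq_take_subset: "w \<in> seqs_upto M \<Longrightarrow> set (seq_take k w) \<subseteq> {1..M}"
  by (auto simp: seqs_upto_def seq_take_def)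

lemma seq_drop_seq_drop: "seq_drop k (seq_drop 1 w) = seq_drop (Suc k) w"
  by (simp add: seq_drop_def)

text \<open>Koenig's lemma for the finitely branching tree of words over \<open>{1..M}\<close>.\<close>
lemma finite_prefix_subcover:
  assumes cover: "\<forall>w\<in>seqs_upto M. \<exists>k. seq_take k w \<in> S"
  shows "\<exists>S'\<subseteq>S. finite S' \<and> (\<forall>w\<in>seqs_upto M. \<exists>k. seq_take k w \<in> S')"
proof (rule ccontr)
  define finitely_covered where "finitely_covered v \<longleftrightarrow> (\<exists>S'\<subseteq>S. finite S' \<and>
      (\<forall>w\<in>seqs_upto M. seq_take (length v) w = v \<longrightarrow> (\<exists>k. seq_take k w \<in> S')))" for v
  assume "\<not> ?thesis"
  then have root: "\<not> finitely_covered []" unfolding finitely_covered_def by simp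
  have child: "\<exists>i\<in>{1..M}. \<not> finitely_covered (v @ [i])" if "\<not> finitely_covered v" for v
  proof (rule ccontr)
    assume "\<not> ?thesis"
    then obtain F where F: "\<forall>i\<in>{1..M}. F i \<subseteq> S \<and> finite (F i) \<and>
        (\<forall>w\<in>seqs_upto M. seq_take (Suc (length v)) w = v @ [i] \<longrightarrow> (\<exists>k. seq_take k w \<in> F i))"
      unfolding finitely_covered_def by (simp add: bchoice_iff) metis
    have "finitely_covered v"
      unfolding finitely_covered_def
    proof (intro exI[of _ "\<Union>i\<in>{1..M}. F i"] conjI ballI impI)
      show "(\<Union>i\<in>{1..M}. F i) \<subseteq> S" "finite (\<Union>i\<in>{1..M}. F i)" using F by auto
      fix w assume "w \<in> seqs_upto M" "seq_take (length v) w = v"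
      moreover from this have "w (length v) \<in> {1..M}" by (auto simp: seqs_upto_def)
      ultimately show "\<exists>k. seq_take k w \<in> (\<Union>i\<in>{1..M}. F i)"
        using F by (fastforce simp: seq_take_Suc_snoc)
    qed
    then show False using that by blast
  qed
  define next_letter where "next_letter v = (SOME i. i \<in> {1..M} \<and> \<not> finitely_covered (v @ [i]))" for v
  have next_letter: "next_letter v \<in> {1..M} \<and> \<not> finitely_covered (v @ [next_letter v])"
    if "\<not> finitely_covered v" for v
    using someI_ex[of "\<lambda>i. i \<in> {1..M} \<and> \<not> finitely_covered (v @ [i])"] child[OF that]
    unfolding next_letter_def by blast
  define branch where "branch = rec_nat [] (\<lambda>_ v. v @ [next_letter v])"
  have branch_Suc: "branch (Suc n) = branch n @ [next_letter (branch n)]" for n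
    by (simp add: branch_def)
  have branch: "\<not> finitely_covered (branch n) \<and> length (branch n) = n" for n
    by (induction n) (use root next_letter in \<open>auto simp: branch_Suc branch_def\<close>)
  define w where "w n = next_letter (branch n)" for n
  have take_w: "seq_take n w = branch n" for n
    by (induction n) (auto simp: seq_take_Suc_snoc branch_Suc w_def, simp add: branch_def)
  have "w \<in> seqs_upto M" using next_letter branch by (auto simp: seqs_upto_def w_def)
  then obtain k where "seq_take k w \<in> S" using cover by blast
  then have "finitely_covered (branch k)"
    unfolding finitely_covered_def by (intro exI[of _ "{branch k}"]) (use take_w branch in auto)
  then show False using branch by blast
qed

lemma prefix_cover_weight_ge_1:
  fixes q :: "nat \<Rightarrow> real"
  assumes q: "\<And>i. 0 \<le> q i" "1 \<le> (\<Sum>i=1..M. q i)"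
    and S: "finite S" "\<forall>w\<in>seqs_upto M. \<exists>k. seq_take k w \<in> S"
  shows "1 \<le> (\<Sum>u\<in>S. prod_list (map q u))"
proof -
  have weight_nonneg: "0 \<le> prod_list (map q u)" for u
    using q(1) by (induction u) auto
  have "M \<noteq> 0" using q(2) by (rule contrapos_pn) simp
  then have const_1: "(\<lambda>_. 1) \<in> seqs_upto M" by (simp add: seqs_upto_def)
  have "1 \<le> (\<Sum>u\<in>S. prod_list (map q u))"
    if "finite S" "\<forall>u\<in>S. length u \<le> N" "\<forall>w\<in>seqs_upto M. \<exists>k. seq_take k w \<in> S" for S N
    using that
  proof (induction N arbitrary: S)
    case 0
    then have "S = {[]}" using const_1 by fastforce
    then show ?case by simp
  next
    case (Suc N)
    show ?case
    proof (cases "[] \<in> S")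
      case True
      then show ?thesis
        using member_le_sum[of "[]" S "\<lambda>u. prod_list (map q u)"] Suc.prems(1) weight_nonneg by simp
    next
      case False
      \<comment> \<open>Split \<open>S\<close> by first letter; each part covers the paths starting with that letter.\<close>
      define T where "T i = {v. i # v \<in> S}" for i
      have T_finite: "finite (T i)" for i
        using finite_subset[of "T i" "tl ` S"] Suc.prems(1)
        unfolding T_def by (force intro: image_eqI[of _ tl "i # _"])
      have T_weight: "1 \<le> (\<Sum>v\<in>T i. prod_list (map q v))" if i: "i \<in> {1..M}" for i
      proof (rule Suc.IH[OF T_finite])
        show "\<forall>v\<in>T i. length v \<le> N" using Suc.prems(2) by (auto simp: T_def)
        show "\<forall>w\<in>seqs_upto M. \<exists>k. seq_take k w \<in> T i"
        proof
          fix w assume w: "w \<in> seqs_upto M"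
          define w' where "w' j = (if j = 0 then i else w (j - 1))" for j
          have "w' \<in> seqs_upto M" using w i by (auto simp: seqs_upto_def w'_def)
          then obtain k where k: "seq_take k w' \<in> S" using Suc.prems(3) by blast
          with False obtain k' where "k = Suc k'" by (cases k) auto
          moreover have "seq_drop 1 w' = w" by (auto simp: seq_drop_def w'_def)
          ultimately have "seq_take k w' = i # seq_take k' w" by (simp add: seq_take_Suc w'_def)
          then show "\<exists>k. seq_take k w \<in> T i" using k by (auto simp: T_def)
        qed
      qed
      have "1 \<le> (\<Sum>i=1..M. q i * 1)" using q(2) by simp
      also have "\<dots> \<le> (\<Sum>i=1..M. q i * (\<Sum>v\<in>T i. prod_list (map q v)))"
        using T_weight q(1) by (intro sum_mono mult_left_mono) auto
      also have "\<dots> = (\<Sum>i=1..M. \<Sum>u\<in>Cons i ` T i. prod_list (map q u))"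
        by (rule sum.cong) (auto simp: sum.reindex sum_distrib_left)
      also have "\<dots> = (\<Sum>u\<in>(\<Union>i\<in>{1..M}. Cons i ` T i). prod_list (map q u))"
        by (rule sum.UNION_disjoint[symmetric]) (auto simp: T_finite)
      also have "\<dots> \<le> (\<Sum>u\<in>S. prod_list (map q u))"
        using Suc.prems(1) weight_nonneg by (intro sum_mono2) (auto simp: T_def)
      finally show ?thesis .
    qed
  qed
  then show ?thesis using S by (metis Max_ge finite_imageI image_eqI)
qed

section \<open>Cylinders of the expansion\<close>

text \<open>\<open>cyl_start p u\<close> and \<open>prod_list (map p u)\<close> are the left end point and the length of the
  interval \<open>T\<^sub>u\<^sub>1 \<circ> \<dots> \<circ> T\<^sub>u\<^sub>k ([0,1])\<close>, the cylinder of the word \<open>u\<close>.\<close>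
fun cyl_start :: "(nat \<Rightarrow> real) \<Rightarrow> nat list \<Rightarrow> real" where
  "cyl_start p [] = 0"
| "cyl_start p (x # u) = phat p x + p x * cyl_start p u"

lemma cyl_start_append:
  "cyl_start p (u @ v) = cyl_start p u + prod_list (map p u) * cyl_start p v"
  by (induction u) (auto simp: algebra_simps)

lemma prod_list_map_powr:
  fixes f :: "'a \<Rightarrow> real"
  assumes "\<forall>x\<in>set u. 0 \<le> f x"
  shows "prod_list (map (\<lambda>x. f x powr s) u) = prod_list (map f u) powr s"
  using assms by (induction u) (auto simp: powr_mult prod_list_nonneg)

lemma set_seq_take_subset_if_seqN: "w \<in> seqN \<Longrightarrow> set (seq_take k w) \<subseteq> {1..}"
  by (auto simp: seqN_def seq_take_def)

lemma seq_drop_in_seqN: "w \<in> seqN \<Longrightarrow> seq_drop k w \<in> seqN"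
  by (simp add: seqN_def seq_drop_def)

lemma seqs_upto_subset_seqN: "seqs_upto M \<subseteq> seqN"
  by (auto simp: seqs_upto_def seqN_def)

lemma seqs_upto_subset_bounded_seqs: "seqs_upto M \<subseteq> bounded_seqs"
  by (auto simp: seqs_upto_def bounded_seqs_def seqN_def)

locale prob_on_N =
  fixes p :: "nat \<Rightarrow> real"
  assumes prob_supported: "prob_supported_by_N p"
begin

lemma p_pos: "1 \<le> i \<Longrightarrow> 0 < p i" and p_less_1: "1 \<le> i \<Longrightarrow> p i < 1"
  using prob_supported unfolding prob_supported_by_N_def by auto

lemma p_nonneg: "1 \<le> i \<Longrightarrow> 0 \<le> p i"
  using p_pos less_imp_le by blast

lemma phat_nonneg: "0 \<le> phat p n"
  unfolding phat_def by (rule sum_nonneg) (simp add: p_nonneg)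

lemma phat_Suc: "1 \<le> n \<Longrightarrow> phat p (Suc n) = phat p n + p n"
  unfolding phat_def by (simp add: sum.atLeastLessThan_Suc)

lemma phat_le_1: "phat p n \<le> 1"
proof -
  have sums: "(\<lambda>i. p (Suc i)) sums 1"
    using prob_supported unfolding prob_supported_by_N_def by simp
  have "phat p n = (\<Sum>i<n - 1. p (Suc i))"
    unfolding phat_def
    using sum.shift_bounds_Suc_ivl[of p 0 "n - 1"] by (cases n) (simp_all add: atLeast0LessThan)
  also have "\<dots> \<le> (\<Sum>i. p (Suc i))"
    using sums by (intro sum_le_suminf) (auto simp: sums_iff p_nonneg)
  finally show ?thesis using sums by (simp add: sums_iff)
qed

lemma phat_add_p_le_1: "1 \<le> n \<Longrightarrow> phat p n + p n \<le> 1"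
  using phat_Suc phat_le_1 by metis

lemma phat_add_p_le_phat: "1 \<le> i \<Longrightarrow> i < j \<Longrightarrow> phat p i + p i \<le> phat p j"
  unfolding phat_Suc[symmetric] unfolding phat_def by (intro sum_mono2) (auto simp: p_nonneg)

lemma prod_list_pos: "set u \<subseteq> {1..} \<Longrightarrow> 0 < prod_list (map p u)"
  by (induction u) (auto intro!: mult_pos_pos simp: p_pos)

lemma cylinder_subset_unit_interval:
  "set u \<subseteq> {1..} \<Longrightarrow> 0 \<le> cyl_start p u \<and> cyl_start p u + prod_list (map p u) \<le> 1"
proof (induction u)
  case Nil
  then show ?case by simp
next
  case (Cons x u)
  then have x: "0 < p x" "phat p x + p x \<le> 1" using p_pos phat_add_p_le_1 by auto
  have "cyl_start p (x # u) + prod_list (map p (x # u))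
      = phat p x + p x * (cyl_start p u + prod_list (map p u))"
    by (simp add: algebra_simps)
  also have "\<dots> \<le> phat p x + p x * 1"
    using Cons x by (intro add_left_mono mult_left_mono) auto
  finally show ?case using Cons x phat_nonneg by simp
qed

lemma prod_list_le_1: "set u \<subseteq> {1..} \<Longrightarrow> prod_list (map p u) \<le> 1"
  using cylinder_subset_unit_interval by (smt (verit))

lemma cylinder_le_if_first_letter_less:
  assumes "b < c" "set (b # u) \<subseteq> {1..}" "set (c # v) \<subseteq> {1..}"
  shows "cyl_start p (b # u) + prod_list (map p (b # u)) \<le> cyl_start p (c # v)"
proof -
  have "cyl_start p (b # u) + prod_list (map p (b # u))
      = phat p b + p b * (cyl_start p u + prod_list (map p u))"
    by (simp add: algebra_simps)
  also have "\<dots> \<le> phat p b + p b"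
    using cylinder_subset_unit_interval[of u] prod_list_pos[of u] p_pos[of b] assms
    by (intro add_left_mono mult_right_le_one_le) auto
  also have "\<dots> \<le> phat p c"
    using assms by (intro phat_add_p_le_phat) auto
  also have "\<dots> \<le> cyl_start p (c # v)"
    using cylinder_subset_unit_interval[of v] p_pos[of c] assms by simp
  finally show ?thesis .
qed

lemma cylinders_disjoint_if_parallel:
  assumes "set u \<subseteq> {1..}" "set v \<subseteq> {1..}" "u \<parallel> v"
  shows "cyl_start p u + prod_list (map p u) \<le> cyl_start p v
    \<or> cyl_start p v + prod_list (map p v) \<le> cyl_start p u"
proof -
  obtain t b c u' v' where bc: "b \<noteq> c" and u: "u = t @ b # u'" and v: "v = t @ c # v'"
    using parallel_decomp[OF assms(3)] by blast
  have t: "0 \<le> prod_list (map p t)" using prod_list_pos[of t] assms u by auto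
  have "cyl_start p (b # u') + prod_list (map p (b # u')) \<le> cyl_start p (c # v')
      \<or> cyl_start p (c # v') + prod_list (map p (c # v')) \<le> cyl_start p (b # u')"
    using bc assms u v cylinder_le_if_first_letter_less
    by (cases "b < c") (auto simp del: cyl_start.simps prod_list.Cons list.map)
  then show ?thesis
    unfolding u v cyl_start_append map_append prod_list.append add.assoc distrib_left[symmetric]
    using mult_left_mono[OF _ t] by (meson add_left_mono)
qed

definition stopping_word :: "real \<Rightarrow> nat list \<Rightarrow> bool" where
  "stopping_word d u \<longleftrightarrow> u \<noteq> [] \<and> prod_list (map p u) \<le> d \<and> d < prod_list (map p (butlast u))"

lemma stopping_words_parallel:
  assumes "stopping_word d u" "stopping_word d v" "u \<noteq> v" "set u \<subseteq> {1..}" "set v \<subseteq> {1..}"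
  shows "u \<parallel> v"
proof -
  \<comment> \<open>A proper extension of a stopping word is already too short before its last letter.\<close>
  have "\<not> prefix u v" if "stopping_word d u" "stopping_word d v" "u \<noteq> v" "set v \<subseteq> {1..}" for u v
  proof
    assume "prefix u v"
    then obtain t where "v = u @ t" "t \<noteq> []" using \<open>u \<noteq> v\<close> by (auto elim: prefixE)
    then have "butlast v = u @ butlast t" "set u \<subseteq> {1..}" "set (butlast t) \<subseteq> {1..}"
      using \<open>set v \<subseteq> {1..}\<close> by (auto simp: butlast_append dest: in_set_butlastD)
    then have "prod_list (map p (butlast v)) \<le> prod_list (map p u)"
      using prod_list_le_1 prod_list_pos by (simp add: mult_left_le less_imp_le)
    then show False using that unfolding stopping_word_def by linarith
  qed
  then show ?thesis using assms unfolding parallel_def by metis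
qed

lemma pi_p_series_nonneg: "w \<in> seqN \<Longrightarrow> 0 \<le> (\<Prod>k\<le>j. p (w k)) * phat p (w (Suc j))"
  by (auto simp: seqN_def p_nonneg phat_nonneg intro!: prod_nonneg mult_nonneg_nonneg)

lemma pi_p_series_partial_sum_le:
  assumes "w \<in> seqN"
  shows "(\<Sum>j<N. (\<Prod>k\<le>j. p (w k)) * phat p (w (Suc j))) \<le> p (w 0) - (\<Prod>k\<le>N. p (w k))"
proof (induction N)
  case 0
  then show ?case by simp
next
  case (Suc N)
  have "phat p (w (Suc N)) \<le> 1 - p (w (Suc N))"
    using assms phat_add_p_le_1[of "w (Suc N)"] by (simp add: seqN_def)
  then have "(\<Prod>k\<le>N. p (w k)) * phat p (w (Suc N)) \<le> (\<Prod>k\<le>N. p (w k)) * (1 - p (w (Suc N)))"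
    using assms by (intro mult_left_mono prod_nonneg) (auto simp: seqN_def p_nonneg)
  then show ?case using Suc by (simp add: algebra_simps)
qed

lemma summable_pi_p_series: "w \<in> seqN \<Longrightarrow> summable (\<lambda>j. (\<Prod>k\<le>j. p (w k)) * phat p (w (Suc j)))"
  using pi_p_series_partial_sum_le pi_p_series_nonneg
  by (intro summableI_nonneg_bounded[where x = "p (w 0)"])
     (auto simp: seqN_def p_nonneg intro!: prod_nonneg order.trans[OF pi_p_series_partial_sum_le])

lemma pi_p_in_unit_interval: "w \<in> seqN \<Longrightarrow> pi_p p w \<in> {0..1}"
proof -
  assume w: "w \<in> seqN"
  then have w0: "1 \<le> w 0" by (simp add: seqN_def)
  have "0 \<le> (\<Prod>k\<le>N. p (w k))" for N
    using w by (intro prod_nonneg) (simp add: seqN_def p_nonneg)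
  then have "(\<Sum>j. (\<Prod>k\<le>j. p (w k)) * phat p (w (Suc j))) \<le> p (w 0)"
    using pi_p_series_partial_sum_le[OF w]
    by (intro suminf_le_const summable_pi_p_series[OF w]) (smt (verit))
  moreover have "0 \<le> (\<Sum>j. (\<Prod>k\<le>j. p (w k)) * phat p (w (Suc j)))"
    using w by (intro suminf_nonneg summable_pi_p_series pi_p_series_nonneg)
  ultimately show ?thesis
    unfolding pi_p_def using phat_nonneg phat_add_p_le_1[OF w0] by auto
qed

lemma pi_p_eq_Cons:
  assumes w: "w \<in> seqN"
  shows "pi_p p w = phat p (w 0) + p (w 0) * pi_p p (seq_drop 1 w)"
proof -
  let ?f = "\<lambda>w j. (\<Prod>k\<le>j. p (w k)) * phat p (w (Suc j))"
  have f_Suc: "?f w (Suc j) = p (w 0) * ?f (seq_drop 1 w) j" for j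
    by (simp only: prod.atMost_Suc_shift) (simp add: seq_drop_def)
  have "(\<Sum>j. ?f w j) = ?f w 0 + (\<Sum>j. ?f w (Suc j))"
    using suminf_split_head[OF summable_pi_p_series[OF w]] by simp
  also have "(\<Sum>j. ?f w (Suc j)) = p (w 0) * (\<Sum>j. ?f (seq_drop 1 w) j)"
    unfolding f_Suc using suminf_mult[OF summable_pi_p_series[OF seq_drop_in_seqN[OF w]]] by simp
  finally show ?thesis
    unfolding pi_p_def by (simp add: seq_drop_def algebra_simps)
qed

lemma pi_p_eq_seq_take:
  "w \<in> seqN \<Longrightarrow>
    pi_p p w = cyl_start p (seq_take k w) + prod_list (map p (seq_take k w)) * pi_p p (seq_drop k w)"
proof (induction k arbitrary: w)
  case 0
  then show ?case by (simp add: seq_drop_def)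
next
  case (Suc k)
  have "pi_p p w = phat p (w 0) + p (w 0) * pi_p p (seq_drop 1 w)"
    using pi_p_eq_Cons[OF Suc.prems] .
  also have "pi_p p (seq_drop 1 w) = cyl_start p (seq_take k (seq_drop 1 w))
      + prod_list (map p (seq_take k (seq_drop 1 w))) * pi_p p (seq_drop (Suc k) w)"
    using Suc.IH[OF seq_drop_in_seqN[OF Suc.prems]] by (simp only: seq_drop_seq_drop)
  finally show ?case by (simp add: seq_take_Suc algebra_simps)
qed

lemma pi_p_in_cylinder:
  assumes w: "w \<in> seqN"
  shows "cyl_start p (seq_take k w) \<le> pi_p p w
    \<and> pi_p p w \<le> cyl_start p (seq_take k w) + prod_list (map p (seq_take k w))"
proof -
  have "0 < prod_list (map p (seq_take k w))"
    using w by (intro prod_list_pos set_seq_take_subset_if_seqN)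
  moreover have "pi_p p (seq_drop k w) \<in> {0..1}"
    using w by (intro pi_p_in_unit_interval seq_drop_in_seqN)
  ultimately show ?thesis
    unfolding pi_p_eq_seq_take[OF w, of k] by (simp add: mult_left_le)
qed

end

section \<open>Mass distribution on cylinders\<close>

locale finite_alphabet = prob_on_N +
  fixes M :: nat and s :: real
  assumes s_pos: "0 < s" and s_less_1: "s < 1"
    and sum_powr_ge_1: "1 \<le> (\<Sum>i=1..M. p i powr s)"
begin

lemma M_pos: "1 \<le> M"
  using sum_powr_ge_1 by (cases M) auto

lemma subset_atLeast_1: "set u \<subseteq> {1..M} \<Longrightarrow> set u \<subseteq> {1..}"
  by auto

definition pmin :: real where "pmin = Min (p ` {1..M})"
definition pmax :: real where "pmax = Max (p ` {1..M})"

lemma pmin_pos: "0 < pmin"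
  unfolding pmin_def using M_pos by (subst Min_gr_iff) (auto intro: p_pos)

lemma pmin_le: "i \<in> {1..M} \<Longrightarrow> pmin \<le> p i"
  unfolding pmin_def by (rule Min_le) auto

lemma pmax_less_1: "pmax < 1"
  unfolding pmax_def using M_pos by (subst Max_less_iff) (auto intro: p_less_1)

lemma le_pmax: "i \<in> {1..M} \<Longrightarrow> p i \<le> pmax"
  unfolding pmax_def by (rule Max_ge) auto

lemma pmax_nonneg: "0 \<le> pmax"
  using le_pmax[of 1] p_nonneg[of 1] M_pos by simp

lemma prod_list_le_pmax_power: "set u \<subseteq> {1..M} \<Longrightarrow> prod_list (map p u) \<le> pmax ^ length u"
proof (induction u)
  case Nil
  then show ?case by simp
next
  case (Cons x u)
  then show ?case
    using le_pmax[of x] prod_list_pos[OF subset_atLeast_1, of u] pmax_nonneg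
    by (auto intro!: mult_mono simp: p_nonneg)
qed

lemma stopping_word_exists:
  assumes w: "w \<in> seqs_upto M" and d: "0 < d" "d < 1"
  shows "\<exists>k. stopping_word d (seq_take k w)"
proof -
  have short: "prod_list (map p (seq_take L w)) \<le> d" if "pmax ^ L < d" for L
    using prod_list_le_pmax_power[OF set_seq_take_subset[OF w], of L] that by simp
  obtain L where "pmax ^ L < d" using real_arch_pow_inv[OF d(1) pmax_less_1] by blast
  define k where "k = (LEAST k. prod_list (map p (seq_take k w)) \<le> d)"
  have k: "prod_list (map p (seq_take k w)) \<le> d"
    unfolding k_def by (rule LeastI[of _ L]) (rule short[OF \<open>pmax ^ L < d\<close>])
  then obtain k' where k': "k = Suc k'" using d by (cases k) auto
  then have "\<not> prod_list (map p (seq_take k' w)) \<le> d"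
    using not_less_Least[of k' "\<lambda>k. prod_list (map p (seq_take k w)) \<le> d"] k_def by simp
  then have "stopping_word d (seq_take k w)"
    using k k' unfolding stopping_word_def by (simp add: seq_take_Suc_snoc)
  then show ?thesis by blast
qed

lemma stopping_word_prod_ge:
  assumes "stopping_word d u" "set u \<subseteq> {1..M}"
  shows "pmin * d \<le> prod_list (map p u)"
proof -
  have "u \<noteq> []" using assms(1) by (simp add: stopping_word_def)
  then have u: "u = butlast u @ [last u]" "last u \<in> {1..M}"
    using subsetD[OF assms(2) last_in_set] by auto
  have "set (butlast u) \<subseteq> {1..}"
    using assms(2) in_set_butlastD by fastforce
  then have "0 \<le> prod_list (map p (butlast u))"
    using prod_list_pos less_imp_le by blast
  then have "d * pmin \<le> prod_list (map p (butlast u)) * p (last u)"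
    using assms pmin_le[OF u(2)] pmin_pos by (intro mult_mono) (auto simp: stopping_word_def)
  also have "\<dots> = prod_list (map p u)"
    by (subst (2) u(1)) simp
  finally show ?thesis by (simp add: mult.commute)
qed

lemma finite_stopping_words: "0 < d \<Longrightarrow> finite {u. set u \<subseteq> {1..M} \<and> stopping_word d u}"
proof -
  assume d: "0 < d"
  obtain L where L: "pmax ^ L < pmin * d"
    using real_arch_pow_inv[OF _ pmax_less_1] pmin_pos d by (meson mult_pos_pos)
  have "length u \<le> L" if "set u \<subseteq> {1..M}" "stopping_word d u" for u
  proof (rule ccontr)
    assume "\<not> length u \<le> L"
    then have "pmax ^ length u \<le> pmax ^ L"
      using pmax_nonneg pmax_less_1 by (intro power_decreasing) auto
    then show False
      using prod_list_le_pmax_power[OF that(1)] stopping_word_prod_ge[OF that(2,1)] L by linarith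
  qed
  then have "{u. set u \<subseteq> {1..M} \<and> stopping_word d u} \<subseteq> {u. set u \<subseteq> {1..M} \<and> length u \<le> L}"
    by blast
  then show ?thesis using finite_lists_length_le[of "{1..M}" L] finite_subset by blast
qed

definition stopping_words_meeting :: "real \<Rightarrow> real set \<Rightarrow> nat list set" where
  "stopping_words_meeting d U = {u. set u \<subseteq> {1..M} \<and> stopping_word d u \<and>
     (\<exists>y\<in>U. cyl_start p u \<le> y \<and> y \<le> cyl_start p u + prod_list (map p u))}"

lemma finite_stopping_words_meeting: "0 < d \<Longrightarrow> finite (stopping_words_meeting d U)"
  by (rule finite_subset[OF _ finite_stopping_words]) (auto simp: stopping_words_meeting_def)

text \<open>The cylinders of these words are disjoint, have length at most \<open>d\<close> and meet a set of
  diameter at most \<open>d\<close>; so they all lie in an interval of length \<open>4 d\<close>.\<close>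
lemma sum_prod_stopping_words_meeting_le:
  assumes U: "bounded U" "diameter U \<le> d" and d: "0 < d"
  shows "(\<Sum>u\<in>stopping_words_meeting d U. prod_list (map p u)) \<le> 4 * d"
proof (cases "U = {}")
  case True
  then show ?thesis using d by (simp add: stopping_words_meeting_def)
next
  case False
  then obtain y0 where y0: "y0 \<in> U" by blast
  let ?S = "stopping_words_meeting d U"
  have "(\<Sum>u\<in>?S. (cyl_start p u + prod_list (map p u)) - cyl_start p u) \<le> (y0 + 2 * d) - (y0 - 2 * d)"
  proof (rule sum_lengths_le_if_disjoint_intervals[OF finite_stopping_words_meeting[OF d]])
    show "\<forall>u\<in>?S. cyl_start p u < cyl_start p u + prod_list (map p u)"
      using prod_list_pos by (force simp: stopping_words_meeting_def)
    show "\<forall>u\<in>?S. \<forall>v\<in>?S. u \<noteq> v \<longrightarrow> cyl_start p u + prod_list (map p u) \<le> cyl_start p v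
        \<or> cyl_start p v + prod_list (map p v) \<le> cyl_start p u"
    proof (intro ballI impI)
      fix u v assume "u \<in> ?S" "v \<in> ?S" "u \<noteq> v"
      then have "set u \<subseteq> {1..}" "set v \<subseteq> {1..}" "stopping_word d u" "stopping_word d v"
        by (auto simp: stopping_words_meeting_def)
      with \<open>u \<noteq> v\<close> show "cyl_start p u + prod_list (map p u) \<le> cyl_start p v
        \<or> cyl_start p v + prod_list (map p v) \<le> cyl_start p u"
        by (intro cylinders_disjoint_if_parallel stopping_words_parallel)
    qed
    show "\<forall>u\<in>?S. y0 - 2 * d \<le> cyl_start p u \<and> cyl_start p u + prod_list (map p u) \<le> y0 + 2 * d"
    proof
      fix u assume "u \<in> ?S"
      then obtain y where y: "y \<in> U" "cyl_start p u \<le> y" "y \<le> cyl_start p u + prod_list (map p u)"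
        and "prod_list (map p u) \<le> d"
        by (auto simp: stopping_words_meeting_def stopping_word_def)
      moreover have "dist y0 y \<le> d"
        using diameter_bounded_bound[OF U(1) y0 y(1)] U(2) by linarith
      ultimately show "y0 - 2 * d \<le> cyl_start p u \<and> cyl_start p u + prod_list (map p u) \<le> y0 + 2 * d"
        by (auto simp: dist_real_def)
    qed
  qed (use d in simp)
  then show ?thesis by simp
qed

lemma stopping_word_mass_le:
  assumes "stopping_word d u" "set u \<subseteq> {1..M}" "0 < d"
  shows "prod_list (map (\<lambda>i. p i powr s) u) \<le> (pmin * d) powr (s - 1) * prod_list (map p u)"
proof -
  have pos: "0 < prod_list (map p u)" using prod_list_pos[OF subset_atLeast_1[OF assms(2)]] .
  have "prod_list (map (\<lambda>i. p i powr s) u) = prod_list (map p u) powr (s - 1) * prod_list (map p u)"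
    using assms(2) pos by (subst prod_list_map_powr) (auto simp: p_nonneg powr_diff)
  also have "\<dots> \<le> (pmin * d) powr (s - 1) * prod_list (map p u)"
    using stopping_word_prod_ge[OF assms(1,2)] pmin_pos assms(3) pos s_less_1
    by (intro mult_right_mono powr_mono2') auto
  finally show ?thesis .
qed

lemma mass_stopping_words_meeting_le:
  assumes U: "bounded U" "diameter U \<le> d" and d: "0 < d"
  shows "(\<Sum>u\<in>stopping_words_meeting d U. prod_list (map (\<lambda>i. p i powr s) u))
    \<le> 4 * pmin powr (s - 1) * d powr s"
proof -
  have "(\<Sum>u\<in>stopping_words_meeting d U. prod_list (map (\<lambda>i. p i powr s) u))
      \<le> (\<Sum>u\<in>stopping_words_meeting d U. (pmin * d) powr (s - 1) * prod_list (map p u))"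
    using d by (intro sum_mono stopping_word_mass_le) (auto simp: stopping_words_meeting_def)
  also have "\<dots> \<le> (pmin * d) powr (s - 1) * (4 * d)"
    unfolding sum_distrib_left[symmetric]
    using sum_prod_stopping_words_meeting_le[OF U d] by (intro mult_left_mono) auto
  also have "\<dots> = 4 * pmin powr (s - 1) * d powr s"
    using pmin_pos d by (simp add: powr_mult powr_diff field_simps)
  finally show ?thesis .
qed

lemma stopping_words_meeting_cover:
  assumes cover: "pi_p p ` seqs_upto M \<subseteq> (\<Union>i. U i)" and d: "\<And>i. 0 < d i \<and> d i < 1"
  shows "\<forall>w\<in>seqs_upto M. \<exists>k. seq_take k w \<in> (\<Union>i. stopping_words_meeting (d i) (U i))"
proof
  fix w assume w: "w \<in> seqs_upto M"
  then obtain i where "pi_p p w \<in> U i" using cover by blast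
  moreover obtain k where "stopping_word (d i) (seq_take k w)"
    using stopping_word_exists[OF w] d by blast
  moreover have "w \<in> seqN" using w seqs_upto_subset_seqN by blast
  ultimately have "seq_take k w \<in> stopping_words_meeting (d i) (U i)"
    using pi_p_in_cylinder[of w k] set_seq_take_subset[OF w]
    unfolding stopping_words_meeting_def by auto
  then show "\<exists>k. seq_take k w \<in> (\<Union>i. stopping_words_meeting (d i) (U i))" by blast
qed

lemma cover_sum_powr_ge:
  assumes cover: "pi_p p ` seqs_upto M \<subseteq> (\<Union>i. U i)"
    and U: "\<And>i. bounded (U i)" "\<And>i. diameter (U i) \<le> d i" and d: "\<And>i. 0 < d i \<and> d i < 1"
  shows "ennreal (1 / (4 * pmin powr (s - 1))) \<le> (\<Sum>i. ennreal (d i powr s))"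
proof -
  define C where "C = 4 * pmin powr (s - 1)"
  define mass where "mass u = prod_list (map (\<lambda>i. p i powr s) u)" for u
  define S where "S i = stopping_words_meeting (d i) (U i)" for i
  have mass_nonneg: "0 \<le> mass u" for u
    unfolding mass_def by (induction u) auto
  have "\<forall>w\<in>seqs_upto M. \<exists>k. seq_take k w \<in> (\<Union>i. S i)"
    unfolding S_def using cover d by (rule stopping_words_meeting_cover)
  from finite_prefix_subcover[OF this] obtain S'
    where S': "S' \<subseteq> (\<Union>i. S i)" "finite S'" "\<forall>w\<in>seqs_upto M. \<exists>k. seq_take k w \<in> S'"
    by auto
  then have "\<forall>u\<in>S'. \<exists>i. u \<in> S i" by auto
  then obtain idx where idx: "\<forall>u\<in>S'. u \<in> S (idx u)" by (rule bchoice[elim_format]) blast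
  have "1 \<le> (\<Sum>u\<in>S'. mass u)"
    unfolding mass_def using sum_powr_ge_1 S'(2,3) by (intro prefix_cover_weight_ge_1) auto
  also have "\<dots> = (\<Sum>i\<in>idx ` S'. \<Sum>u\<in>{u\<in>S'. idx u = i}. mass u)"
    by (rule sum.image_gen[OF S'(2)])
  also have "\<dots> \<le> (\<Sum>i\<in>idx ` S'. \<Sum>u\<in>S i. mass u)"
  proof (intro sum_mono sum_mono2)
    show "finite (S i)" for i unfolding S_def using d by (intro finite_stopping_words_meeting) simp
  qed (use idx mass_nonneg in auto)
  also have "\<dots> \<le> (\<Sum>i\<in>idx ` S'. C * d i powr s)"
    unfolding S_def mass_def C_def using U d by (intro sum_mono mass_stopping_words_meeting_le) simp_all
  also have "\<dots> = C * (\<Sum>i\<in>idx ` S'. d i powr s)"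
    by (simp add: sum_distrib_left)
  finally have "1 / C \<le> (\<Sum>i\<in>idx ` S'. d i powr s)"
    using pmin_pos by (simp add: C_def divide_le_eq mult.commute)
  then have "ennreal (1 / C) \<le> (\<Sum>i\<in>idx ` S'. ennreal (d i powr s))"
    by (simp add: ennreal_leI sum_ennreal)
  also have "\<dots> \<le> (\<Sum>i. ennreal (d i powr s))"
    using S'(2) by (intro sum_le_suminf) auto
  finally show ?thesis unfolding C_def .
qed

lemma hausdorff_measure_ne_0:
  assumes "pi_p p ` seqs_upto M \<subseteq> E"
  shows "hausdorff_measure s E \<noteq> 0"
proof -
  have "0 < ennreal (1 / (4 * pmin powr (s - 1)))" using pmin_pos by simp
  also have "ennreal (1 / (4 * pmin powr (s - 1))) \<le> hausdorff_delta s (1/2) E"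
  proof (rule hausdorff_delta_ge_if_positive_covers_ge[OF s_pos])
    fix U :: "nat \<Rightarrow> real set" and d :: "nat \<Rightarrow> real"
    assume "E \<subseteq> (\<Union>i. U i)" "\<And>i. bounded (U i)" "\<And>i. diameter (U i) \<le> d i"
      "\<And>i. 0 < d i \<and> d i < 1"
    with assms show "ennreal (1 / (4 * pmin powr (s - 1))) \<le> (\<Sum>i. ennreal (d i powr s))"
      by (intro cover_sum_powr_ge[of U d]) auto
  qed simp
  also have "\<dots> \<le> hausdorff_measure s E"
    unfolding hausdorff_measure_def by (rule SUP_upper) simp
  finally show ?thesis by simp
qed

end

context prob_on_N
begin

lemma exists_sum_powr_ge_1:
  assumes "s < 1"
  shows "\<exists>M. 1 \<le> (\<Sum>i=1..M. p i powr s)"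
proof -
  have p1: "0 < p 1" "p 1 < 1" using p_pos p_less_1 by auto
  \<comment> \<open>Already the first term gains \<open>g\<close> over \<open>p 1\<close>, and the partial sums of \<open>p\<close> tend to 1.\<close>
  define g where "g = p 1 powr s - p 1"
  have "p 1 powr 1 < p 1 powr s" using powr_less_mono'[OF p1 assms] .
  then have g: "0 < g" using p1 unfolding g_def by simp
  have "(\<lambda>i. p (Suc i)) sums 1" using prob_supported unfolding prob_supported_by_N_def by simp
  then have "(\<lambda>M. \<Sum>i=1..M. p i) \<longlonglongrightarrow> 1" by (simp add: sums_def sum.atLeast1_atMost_eq)
  then have "\<forall>\<^sub>F M in sequentially. 1 - g < (\<Sum>i=1..M. p i) \<and> 1 \<le> M"
    using g by (intro eventually_conj order_tendstoD eventually_ge_at_top) auto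
  then obtain M where M: "1 - g < (\<Sum>i=1..M. p i)" "1 \<le> M"
    unfolding eventually_sequentially by blast
  have "(\<Sum>i=1..M. p i) + g \<le> (\<Sum>i=1..M. p i powr s)"
  proof -
    have "(\<Sum>i=1..M. p i) + g = (\<Sum>i=1..M. p i + (if i = 1 then g else 0))"
      using M(2) by (simp add: sum.distrib)
    also have "\<dots> \<le> (\<Sum>i=1..M. p i powr s)"
    proof (rule sum_mono)
      fix i assume "i \<in> {1..M}"
      then have "0 \<le> p i" "p i \<le> 1" using p_nonneg p_less_1[of i] by auto
      then have "p i powr 1 \<le> p i powr s" using assms by (intro powr_mono') auto
      then show "p i + (if i = 1 then g else 0) \<le> p i powr s" using p_pos g_def by auto
    qed
    finally show ?thesis .
  qed
  then show ?thesis using M(1) by (intro exI[of _ M]) linarith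
qed

lemma hausdorff_measure_pi_p_bounded_seqs_ne_0:
  assumes "0 < s" "s < 1"
  shows "hausdorff_measure s (pi_p p ` bounded_seqs) \<noteq> 0"
proof -
  obtain M where "1 \<le> (\<Sum>i=1..M. p i powr s)" using exists_sum_powr_ge_1[OF assms(2)] by blast
  then interpret finite_alphabet p M s by unfold_locales (use assms in auto)
  show ?thesis using seqs_upto_subset_bounded_seqs by (intro hausdorff_measure_ne_0) auto
qed

end

theorem corollary1:
  fixes p :: "nat \<Rightarrow> real"
  assumes "prob_supported_by_N p"
  shows "hausdorff_dim (pi_p p ` bounded_seqs) = 1"
proof -
  interpret prob_on_N p by (rule prob_on_N.intro[OF assms])
  have "pi_p p ` bounded_seqs \<subseteq> {0..1}"
    using pi_p_in_unit_interval by (auto simp: bounded_seqs_def)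
  then show ?thesis
    using hausdorff_measure_pi_p_bounded_seqs_ne_0
    by (intro hausdorff_dim_eqI hausdorff_measure_eq_0_if_subset_unit_interval) auto
qed

end
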